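(* Let $t\in\mathbb{R}$ be such that $\beta_X<h(t)<\infty$ and $E[e^{tY-h(t)X}]=1$. Suppose that either (1) $\Pr\{X\ge0\}=1$, or (2) $\mathcal{D}_t^\circ\ne\emptyset$ and $E[e^{q(tY-(0\wedge h(t))X)}\mid X>0]<\infty$ for all $q>0$. Then $\frac1x\log M_x(t)\to h(t)$ as $x\to\infty$.
   Context: $(X_n,Y_n)_{n\ge1}$ are i.i.d. copies of $(X,Y)\in\mathbb{R}^2$; $X,Y$ nondegenerate and $\Pr\{\sup_{n\ge1}\sum_{i=1}^nX_i=\infty\}=1$. For $x\ge0$, $N(x)=\max\{n:\sum_{i=1}^kX_i\le x\ \forall k\le n\}$ if $X_1\le x$, else $N(x)=0$; $W(x)=\sum_{i=1}^{N(x)}Y_i$; $M_x(t)=E[e^{tW(x)}]$. $\mathcal{D}_t=\{s:E[e^{tY-sX}]\le1\}$, $h(t)=\inf\mathcal{D}_t$ ($\inf\emptyset=\infty$), $\beta_X=\limsup_{x\to\infty}\frac1x\log\Pr\{X>x\}$. $A^\circ$ is the interior of $A$, $a\wedge b=\min\{a,b\}$. *)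

theory Defs
  imports "HOL-Probability.Probability"
begin

text \<open>Index convention: the i.i.d. pairs (X_1,Y_1),(X_2,Y_2),... are X 0, Y 0, X 1, Y 1, ...
  so that X_{i+1} = X i. The generic pair (X,Y) is (X 0, Y 0).\<close>

definition Nfun :: "(nat \<Rightarrow> 'a \<Rightarrow> real) \<Rightarrow> real \<Rightarrow> 'a \<Rightarrow> nat" where
  "Nfun X x \<omega> = (GREATEST n. \<forall>k\<in>{1..n}. (\<Sum>i<k. X i \<omega>) \<le> x)"

definition Wfun :: "(nat \<Rightarrow> 'a \<Rightarrow> real) \<Rightarrow> (nat \<Rightarrow> 'a \<Rightarrow> real) \<Rightarrow> real \<Rightarrow> 'a \<Rightarrow> real" where
  "Wfun X Y x \<omega> = (\<Sum>i<Nfun X x \<omega>. Y i \<omega>)"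

definition Mgf :: "'a measure \<Rightarrow> (nat \<Rightarrow> 'a \<Rightarrow> real) \<Rightarrow> (nat \<Rightarrow> 'a \<Rightarrow> real) \<Rightarrow> real \<Rightarrow> real \<Rightarrow> ennreal" where
  "Mgf M X Y x t = (\<integral>\<^sup>+ \<omega>. ennreal (exp (t * Wfun X Y x \<omega>)) \<partial>M)"

definition Lap :: "'a measure \<Rightarrow> ('a \<Rightarrow> real) \<Rightarrow> ('a \<Rightarrow> real) \<Rightarrow> real \<Rightarrow> real \<Rightarrow> ennreal" where
  "Lap M X Y t s = (\<integral>\<^sup>+ \<omega>. ennreal (exp (t * Y \<omega> - s * X \<omega>)) \<partial>M)"

definition Dset :: "'a measure \<Rightarrow> ('a \<Rightarrow> real) \<Rightarrow> ('a \<Rightarrow> real) \<Rightarrow> real \<Rightarrow> real set" where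
  "Dset M X Y t = {s. Lap M X Y t s \<le> 1}"

text \<open>h(t) = inf D_t, with inf of the empty set = +infinity.\<close>
definition hfun :: "'a measure \<Rightarrow> ('a \<Rightarrow> real) \<Rightarrow> ('a \<Rightarrow> real) \<Rightarrow> real \<Rightarrow> ereal" where
  "hfun M X Y t = Inf (ereal ` Dset M X Y t)"

definition elog :: "real \<Rightarrow> ereal" where
  "elog p = (if p \<le> 0 then -\<infinity> else ereal (ln p))"

definition betaX :: "'a measure \<Rightarrow> ('a \<Rightarrow> real) \<Rightarrow> ereal" where
  "betaX M X = Limsup at_top (\<lambda>x::real. ereal (1 / x) * elog (measure M {\<omega>\<in>space M. X \<omega> > x}))"

definition cond_exp_event :: "'a measure \<Rightarrow> ('a \<Rightarrow> real) \<Rightarrow> 'a set \<Rightarrow> ennreal" where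
  "cond_exp_event M f A = (\<integral>\<^sup>+ \<omega>. ennreal (f \<omega>) * indicator A \<omega> \<partial>M) / ennreal (measure M A)"

end

theory Submission
  imports Defs
begin

text \<open>
  Write S_n and S^Y_n for the partial sums of the X_i and Y_i. Splitting according to the
  first passage index, M_x(t) is the sum over n of E[exp(t S^Y_n); N(x) = n], and on the event
  {N(x) = n} we have S_n \<le> x < S_(n+1). Moreover t S^Y_n = \<Sum>(t Y_i - s X_i) + s S_n, and the
  summands are independent.

  Upper bound: h(t) lies in the convex set D_t, which extends to the right of h(t), so strict
  convexity yields s slightly above h(t) with E[exp(tY - sX)] = q < 1. The n-th term is then at
  most exp(s x) q^n E[exp(max 0 (-s) X)], and the overshoot factor is finite because
  beta_X < h(t) < s. Summing the geometric series gives M_x(t) \<le> C exp(s x).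

  Lower bound: for s < h(t) we have E[exp(tY - sX)] > 1, and already a truncation g of this tilt
  to a bounded box has mass L > 1. Let A_n and E_n be the g-tilted masses of staying below x up
  to time n and of leaving at time n. The renewal identity L A_n = E_n + A_(n+1) telescopes to
  \<Sum>_(n<m) E_n / L^(n+1) = 1 - A_m / L^m, while A_n \<le> exp((h - s) x) since E[exp(tY - hX)] = 1;
  hence the E_n sum to at least 1/2. On the box the overshoot is bounded, so the g-tilted mass
  of leaving at time n is at most a constant times exp(-s x) E[exp(t S^Y_n); N(x) = n], and
  M_x(t) \<ge> c exp(s x).

  Letting s tend to h(t) from both sides gives the limit.
\<close>

lemma exp_midpoint_less:
  fixes c d :: real
  assumes "c \<noteq> d"
  shows "exp ((c + d) / 2) < (exp c + exp d) / 2"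
proof -
  have sq: "exp z = exp (z / 2) * exp (z / 2)" for z :: real
    by (simp flip: exp_add)
  have "exp (c / 2) \<noteq> exp (d / 2)" using assms by simp
  then have "0 < (exp (c / 2) - exp (d / 2))\<^sup>2 / 2" by simp
  also have "\<dots> = (exp c + exp d) / 2 - exp ((c + d) / 2)"
    by (subst (4 5) sq) (simp add: power2_eq_square field_simps flip: exp_add)
  finally show ?thesis by simp
qed

lemma convex_Dset:
  assumes [measurable]: "X \<in> borel_measurable M" "Y \<in> borel_measurable M"
  shows "convex (Dset M X Y t)"
proof (rule convexI)
  fix a b u v :: real
  assume a: "a \<in> Dset M X Y t" and b: "b \<in> Dset M X Y t"
    and uv: "0 \<le> u" "0 \<le> v" "u + v = 1"
  have u: "u = 1 - v" using uv(3) by simp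
  have "exp (t * Y \<omega> - (u * a + v * b) * X \<omega>)
      \<le> u * exp (t * Y \<omega> - a * X \<omega>) + v * exp (t * Y \<omega> - b * X \<omega>)" for \<omega>
    using convex_onD[OF exp_convex, of v "t * Y \<omega> - a * X \<omega>" "t * Y \<omega> - b * X \<omega>"] uv
    by (simp add: u algebra_simps)
  then have "Lap M X Y t (u * a + v * b)
      \<le> (\<integral>\<^sup>+\<omega>. ennreal u * ennreal (exp (t * Y \<omega> - a * X \<omega>)) + ennreal v * ennreal (exp (t * Y \<omega> - b * X \<omega>)) \<partial>M)"
    unfolding Lap_def using uv
    by (intro nn_integral_mono) (simp add: ennreal_leI flip: ennreal_mult ennreal_plus)
  also have "\<dots> = ennreal u * Lap M X Y t a + ennreal v * Lap M X Y t b"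
    unfolding Lap_def by (simp add: nn_integral_add nn_integral_cmult)
  also have "\<dots> \<le> ennreal u * 1 + ennreal v * 1"
    using a b by (intro add_mono mult_left_mono) (auto simp: Dset_def)
  also have "\<dots> = 1" using uv by (simp flip: ennreal_plus)
  finally show "u *\<^sub>R a + v *\<^sub>R b \<in> Dset M X Y t" by (simp add: Dset_def)
qed

lemma Lap_midpoint_less:
  assumes [measurable]: "X \<in> borel_measurable M" "Y \<in> borel_measurable M"
    and X_nonzero: "\<not> (AE \<omega> in M. X \<omega> = 0)"
    and "a \<noteq> b" and a: "a \<in> Dset M X Y t" and b: "b \<in> Dset M X Y t"
  shows "Lap M X Y t ((a + b) / 2) < 1"
proof -
  define f where "f \<omega> = exp (t * Y \<omega> - (a + b) / 2 * X \<omega>)" for \<omega>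
  define g where "g \<omega> = (exp (t * Y \<omega> - a * X \<omega>) + exp (t * Y \<omega> - b * X \<omega>)) / 2" for \<omega>
  have mid: "t * Y \<omega> - (a + b) / 2 * X \<omega> = ((t * Y \<omega> - a * X \<omega>) + (t * Y \<omega> - b * X \<omega>)) / 2" for \<omega>
    by (simp add: field_simps)
  have f_less_g: "f \<omega> < g \<omega>" if "X \<omega> \<noteq> 0" for \<omega>
    unfolding f_def g_def mid using that \<open>a \<noteq> b\<close> by (intro exp_midpoint_less) simp
  have f_le_g: "f \<omega> \<le> g \<omega>" for \<omega>
    using f_less_g[of \<omega>] by (cases "X \<omega> = 0") (auto simp: f_def g_def)
  have "(\<integral>\<^sup>+\<omega>. g \<omega> \<partial>M) = (Lap M X Y t a + Lap M X Y t b) / 2"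
    unfolding g_def Lap_def
    by (simp add: divide_ennreal[symmetric] nn_integral_add nn_integral_divide)
  also have "\<dots> \<le> (1 + 1) / 2"
    using a b by (intro divide_right_mono_ennreal add_mono) (auto simp: Dset_def)
  finally have g_le_1: "(\<integral>\<^sup>+\<omega>. g \<omega> \<partial>M) \<le> 1" by simp
  have "(\<integral>\<^sup>+\<omega>. f \<omega> \<partial>M) < (\<integral>\<^sup>+\<omega>. g \<omega> \<partial>M)"
  proof (rule nn_integral_less)
    show "(\<integral>\<^sup>+\<omega>. f \<omega> \<partial>M) \<noteq> \<infinity>"
      using order_trans[OF nn_integral_mono g_le_1, of f] f_le_g by (auto simp: ennreal_leI top_unique)
    show "\<not> (AE \<omega> in M. ennreal (g \<omega>) \<le> ennreal (f \<omega>))"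
    proof
      assume "AE \<omega> in M. ennreal (g \<omega>) \<le> ennreal (f \<omega>)"
      then have "AE \<omega> in M. X \<omega> = 0"
        by eventually_elim (use f_less_g in \<open>force simp: f_def ennreal_le_iff\<close>)
      with X_nonzero show False by simp
    qed
  qed (use f_le_g in \<open>auto simp: f_def g_def ennreal_leI\<close>)
  with g_le_1 show ?thesis unfolding Lap_def f_def by simp
qed

lemma Lap_gt_1_below_hfun:
  assumes "ereal s < hfun M X Y t"
  shows "1 < Lap M X Y t s"
  using assms Inf_lower[of "ereal s" "ereal ` Dset M X Y t"] by (force simp: hfun_def Dset_def not_less)

lemma Dset_right_of_hfun:
  assumes h: "hfun M X Y t = ereal h" "h \<in> Dset M X Y t"
    and right: "(AE \<omega> in M. 0 \<le> X \<omega>) \<or> interior (Dset M X Y t) \<noteq> {}"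
  shows "\<exists>d>h. d \<in> Dset M X Y t"
  using right
proof
  assume "AE \<omega> in M. 0 \<le> X \<omega>"
  then have "Lap M X Y t (h + 1) \<le> Lap M X Y t h"
    unfolding Lap_def by (intro nn_integral_mono_AE) (auto elim!: eventually_mono simp: algebra_simps)
  with h(2) show ?thesis by (intro exI[of _ "h + 1"]) (auto simp: Dset_def)
next
  assume "interior (Dset M X Y t) \<noteq> {}"
  then obtain p e where "0 < e" and ball: "ball p e \<subseteq> Dset M X Y t"
    by (auto simp: mem_interior)
  then have "p \<in> Dset M X Y t" "p + e / 2 \<in> Dset M X Y t"
    by (auto intro!: subsetD[OF ball] simp: dist_real_def)
  moreover have "h \<le> p"
    using Inf_lower[of "ereal p" "ereal ` Dset M X Y t"] h(1) \<open>p \<in> Dset M X Y t\<close> by (simp add: hfun_def)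
  ultimately show ?thesis using \<open>0 < e\<close> by (intro exI[of _ "p + e / 2"]) auto
qed

lemma Lap_less_1_right_of_hfun:
  assumes [measurable]: "X \<in> borel_measurable M" "Y \<in> borel_measurable M"
    and X_nonzero: "\<not> (AE \<omega> in M. X \<omega> = 0)"
    and h: "hfun M X Y t = ereal h" "h \<in> Dset M X Y t"
    and right: "(AE \<omega> in M. 0 \<le> X \<omega>) \<or> interior (Dset M X Y t) \<noteq> {}"
    and "0 < \<epsilon>"
  shows "\<exists>s. h < s \<and> s < h + \<epsilon> \<and> Lap M X Y t s < 1"
proof -
  obtain d where "h < d" "d \<in> Dset M X Y t" using Dset_right_of_hfun[OF h right] by blast
  define b where "b = min d (h + \<epsilon>)"
  have "h < b" "b \<le> h + \<epsilon>" using \<open>h < d\<close> \<open>0 < \<epsilon>\<close> by (auto simp: b_def)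
  have "b \<in> closed_segment h d"
    using \<open>h < b\<close> by (auto simp: closed_segment_eq_real_ivl b_def)
  then have "b \<in> Dset M X Y t"
    using convex_Dset[of X M Y t] h(2) \<open>d \<in> Dset M X Y t\<close> by (auto simp: convex_contains_segment)
  then have "Lap M X Y t ((h + b) / 2) < 1"
    using \<open>h < b\<close> by (intro Lap_midpoint_less[OF _ _ X_nonzero _ h(2)]) auto
  with \<open>h < b\<close> \<open>b \<le> h + \<epsilon>\<close> show ?thesis by (intro exI[of _ "(h + b) / 2"]) auto
qed

lemma tail_le_exp_of_betaX_less:
  assumes "betaX M Z < ereal r"
  shows "\<forall>\<^sub>F x in at_top. measure M {\<omega>\<in>space M. Z \<omega> > x} \<le> exp (r * x)"
  using Limsup_lessD[OF assms[unfolded betaX_def]] eventually_gt_at_top[of 0]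
proof eventually_elim
  case (elim x)
  define p where "p = measure M {\<omega>\<in>space M. Z \<omega> > x}"
  have "p \<le> exp (r * x)"
  proof (cases "p \<le> 0")
    case False
    then have "ln p / x < r" using elim by (simp flip: p_def add: elog_def)
    then have "ln p < r * x" using \<open>0 < x\<close> by (simp add: divide_less_eq)
    then show ?thesis using False by (metis exp_less_cancel_iff exp_ln less_imp_le not_le)
  qed (meson exp_ge_zero order_trans)
  then show ?case by (simp add: p_def)
qed

lemma exp_le_tail_series:
  fixes z a :: real and k0 :: nat
  assumes "0 < a"
  shows "ennreal (exp (a * z))
    \<le> ennreal (exp (a * k0)) + (\<Sum>k. ennreal (exp (a * (k0 + k + 1))) * indicator {real (k0 + k)<..} z)"
proof (cases "z \<le> k0")
  case True
  then have "ennreal (exp (a * z)) \<le> ennreal (exp (a * k0))"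
    using assms by (intro ennreal_leI) simp
  then show ?thesis by (rule add_increasing2[OF zero_le])
next
  case False
  define j where "j = nat (\<lceil>z\<rceil> - k0 - 1)"
  have j: "real (k0 + j) + 1 = \<lceil>z\<rceil>" using False by (simp add: j_def less_ceiling_iff)
  have "real (k0 + j) < z" "z \<le> real (k0 + j) + 1"
    using j ceiling_correct[of z] by linarith+
  then have "ennreal (exp (a * z)) \<le> ennreal (exp (a * (k0 + j + 1))) * indicator {real (k0 + j)<..} z"
    using assms by (simp add: ennreal_leI)
  also have "\<dots> \<le> (\<Sum>k. ennreal (exp (a * (k0 + k + 1))) * indicator {real (k0 + k)<..} z)"
    by (rule sum_le_suminf[of _ "{j}", simplified]) simp_all
  finally show ?thesis by (rule add_increasing[OF zero_le])
qed

lemma nn_integral_exp_finite_of_betaX_less: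
  assumes "prob_space M" and [measurable]: "Z \<in> borel_measurable M"
    and "betaX M Z < ereal r" and "0 < a" and "a + r < 0"
  shows "(\<integral>\<^sup>+\<omega>. ennreal (exp (a * Z \<omega>)) \<partial>M) < \<infinity>"
proof -
  interpret prob_space M by fact
  obtain x0 where x0: "\<And>x. x0 \<le> x \<Longrightarrow> measure M {\<omega>\<in>space M. Z \<omega> > x} \<le> exp (r * x)"
    using tail_le_exp_of_betaX_less[OF assms(3)] by (auto simp: eventually_at_top_linorder)
  define k0 where "k0 = nat \<lceil>x0\<rceil>"
  define T where "T k = {\<omega>\<in>space M. Z \<omega> > real (k0 + k)}" for k
  have T_le: "measure M (T k) \<le> exp (r * (k0 + k))" for k
    unfolding T_def k0_def by (intro x0) linarith
  define c where "c = exp (a + (a + r) * k0)"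
  have term_le: "(\<integral>\<^sup>+\<omega>. ennreal (exp (a * (k0 + k + 1))) * indicator (T k) \<omega> \<partial>M)
      \<le> ennreal (c * exp (a + r) ^ k)" for k
  proof -
    have "exp (a * (k0 + k + 1)) * measure M (T k) \<le> exp (a * (k0 + k + 1)) * exp (r * (k0 + k))"
      using T_le by (intro mult_left_mono) auto
    also have "\<dots> = c * exp (a + r) ^ k"
      by (simp add: c_def algebra_simps flip: exp_add exp_of_nat_mult)
    finally show ?thesis
      by (simp add: T_def nn_integral_cmult_indicator emeasure_eq_measure ennreal_leI flip: ennreal_mult)
  qed
  have "(\<integral>\<^sup>+\<omega>. ennreal (exp (a * Z \<omega>)) \<partial>M)
      \<le> (\<integral>\<^sup>+\<omega>. ennreal (exp (a * k0)) + (\<Sum>k. ennreal (exp (a * (k0 + k + 1))) * indicator (T k) \<omega>) \<partial>M)"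
    using exp_le_tail_series[OF \<open>0 < a\<close>] by (intro nn_integral_mono) (simp add: T_def indicator_def)
  also have "\<dots> = ennreal (exp (a * k0)) + (\<Sum>k. \<integral>\<^sup>+\<omega>. ennreal (exp (a * (k0 + k + 1))) * indicator (T k) \<omega> \<partial>M)"
    by (simp add: T_def nn_integral_add nn_integral_suminf emeasure_space_1)
  also have "\<dots> \<le> ennreal (exp (a * k0)) + (\<Sum>k. ennreal (c * exp (a + r) ^ k))"
    by (intro add_left_mono suminf_le term_le) auto
  also have "(\<Sum>k. ennreal (c * exp (a + r) ^ k)) = ennreal (c * (1 / (1 - exp (a + r))))"
    using \<open>a + r < 0\<close> by (intro suminf_ennreal_eq sums_mult geometric_sums) (auto simp: c_def)
  finally show ?thesis
    by (rule le_less_trans) (simp flip: ennreal_plus add: less_top[symmetric])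
qed

lemma nn_integral_exp_max_finite_of_betaX_less:
  assumes "prob_space M" and [measurable]: "Z \<in> borel_measurable M"
    and "betaX M Z < ereal r" and "r < s"
  shows "(\<integral>\<^sup>+\<omega>. ennreal (exp (max 0 (- s) * Z \<omega>)) \<partial>M) < \<infinity>"
proof (cases "0 \<le> s")
  case True
  then show ?thesis by (simp add: prob_space.emeasure_space_1[OF assms(1)])
next
  case False
  then show ?thesis
    using nn_integral_exp_finite_of_betaX_less[OF assms(1-3), of "- s"] \<open>r < s\<close> by simp
qed

lemma tendsto_ln_div_of_exp_bounds:
  fixes F :: "real \<Rightarrow> ennreal" and h :: real
  assumes upper: "\<And>\<epsilon>. 0 < \<epsilon> \<Longrightarrow> \<exists>s C. s < h + \<epsilon> \<and> (\<forall>\<^sub>F x in at_top. F x \<le> ennreal (C * exp (s * x)))"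
    and lower: "\<And>\<epsilon>. 0 < \<epsilon> \<Longrightarrow> \<exists>s c. h - \<epsilon> < s \<and> 0 < c \<and> (\<forall>\<^sub>F x in at_top. ennreal (c * exp (s * x)) \<le> F x)"
  shows "((\<lambda>x. ln (enn2real (F x)) / x) \<longlongrightarrow> h) at_top"
proof (rule tendstoI)
  fix \<epsilon> :: real assume "0 < \<epsilon>"
  obtain s2 C where "s2 < h + \<epsilon>" and up: "\<forall>\<^sub>F x in at_top. F x \<le> ennreal (C * exp (s2 * x))"
    using upper[OF \<open>0 < \<epsilon>\<close>] by blast
  obtain s1 c where "h - \<epsilon> < s1" "0 < c" and lo: "\<forall>\<^sub>F x in at_top. ennreal (c * exp (s1 * x)) \<le> F x"
    using lower[OF \<open>0 < \<epsilon>\<close>] by blast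
  have "((\<lambda>x. ln C / x) \<longlongrightarrow> 0) at_top" "((\<lambda>x. ln c / x) \<longlongrightarrow> 0) at_top"
    by (intro tendsto_divide_0[OF tendsto_const] filterlim_at_top_imp_at_infinity filterlim_ident)+
  then have "\<forall>\<^sub>F x in at_top. ln C / x < h + \<epsilon> - s2" "\<forall>\<^sub>F x in at_top. h - \<epsilon> - s1 < ln c / x"
    using \<open>s2 < h + \<epsilon>\<close> \<open>h - \<epsilon> < s1\<close> by (auto intro: order_tendstoD)
  with up lo eventually_gt_at_top[of 0]
  show "\<forall>\<^sub>F x in at_top. dist (ln (enn2real (F x)) / x) h < \<epsilon>"
  proof eventually_elim
    case (elim x)
    have "F x < \<top>" using elim(1) by (simp add: le_less_trans)
    then obtain m where Fm: "F x = ennreal m" "0 \<le> m" by (cases "F x") auto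
    have "0 < c * exp (s1 * x)" using \<open>0 < c\<close> by simp
    with elim(2) Fm have m_lo: "c * exp (s1 * x) \<le> m" by (simp add: ennreal_le_iff)
    with \<open>0 < c * exp (s1 * x)\<close> have "0 < m" by linarith
    with elim(1) Fm have m_hi: "m \<le> C * exp (s2 * x)" by (simp add: ennreal_le_iff2)
    with \<open>0 < m\<close> have "0 < C" by (metis exp_gt_zero less_le_trans zero_less_mult_pos2)
    have "ln c + s1 * x \<le> ln m"
      using ln_le_cancel_iff[of "c * exp (s1 * x)" m] m_lo \<open>0 < c\<close> \<open>0 < m\<close> by (simp add: ln_mult)
    moreover have "ln m \<le> ln C + s2 * x"
      using ln_le_cancel_iff[of m "C * exp (s2 * x)"] m_hi \<open>0 < C\<close> \<open>0 < m\<close> by (simp add: ln_mult)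
    ultimately have "(ln c + s1 * x) / x \<le> ln m / x" "ln m / x \<le> (ln C + s2 * x) / x"
      using \<open>0 < x\<close> by (simp_all add: divide_right_mono)
    then have "ln c / x + s1 \<le> ln m / x" "ln m / x \<le> ln C / x + s2"
      using \<open>0 < x\<close> by (simp_all add: add_divide_distrib)
    then show ?case using elim(4,5) by (simp add: dist_real_def Fm abs_less_iff)
  qed
qed

lemma ex_partial_sum_ge_half:
  fixes a e :: "nat \<Rightarrow> real"
  assumes "1 < L" and a0: "a 0 = 1" and step: "\<And>n. e n + a (Suc n) = a n * L"
    and e_nonneg: "\<And>n. 0 \<le> e n" and a_bounded: "\<And>n. a n \<le> B"
  shows "\<exists>m. 1 / 2 \<le> (\<Sum>n<m. e n)"
proof -
  have telescope: "(\<Sum>n<m. e n / L ^ Suc n) = 1 - a m / L ^ m" for m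
  proof (induction m)
    case (Suc m)
    have "e m / L ^ Suc m = a m / L ^ m - a (Suc m) / L ^ Suc m"
      using step[of m] \<open>1 < L\<close> by (simp add: field_simps)
    with Suc show ?case by simp
  qed (simp add: a0)
  obtain m where m: "2 * B < L ^ m" using real_arch_pow[OF \<open>1 < L\<close>] by blast
  have "a m / L ^ m < 1 / 2"
    using a_bounded[of m] m \<open>1 < L\<close> by (simp add: divide_less_eq)
  then have "1 / 2 \<le> (\<Sum>n<m. e n / L ^ Suc n)" unfolding telescope by linarith
  also have "\<dots> \<le> (\<Sum>n<m. e n)"
  proof (rule sum_mono)
    fix n
    have "1 \<le> L ^ Suc n" using \<open>1 < L\<close> by (intro one_le_power) simp
    then show "e n / L ^ Suc n \<le> e n" using divide_left_mono[OF _ e_nonneg[of n], of 1] by simp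
  qed
  finally show ?thesis ..
qed

lemma prod_le_exp_sum:
  fixes f :: "nat \<Rightarrow> ennreal"
  assumes "\<And>i. i < n \<Longrightarrow> f i \<le> ennreal (exp (a i))"
  shows "(\<Prod>i<n. f i) \<le> ennreal (exp (\<Sum>i<n. a i))"
  using assms
proof (induction n)
  case (Suc n)
  then have "(\<Prod>i<Suc n. f i) \<le> ennreal (exp (\<Sum>i<n. a i)) * ennreal (exp (a n))"
    by (simp add: mult_mono)
  then show ?case by (simp add: exp_add ennreal_mult)
qed simp

definition tilt_trunc :: "real \<Rightarrow> real \<Rightarrow> real \<Rightarrow> real \<times> real \<Rightarrow> ennreal" where
  "tilt_trunc t s K z =
    (if \<bar>fst z\<bar> \<le> K \<and> \<bar>snd z\<bar> \<le> K then ennreal (exp (t * snd z - s * fst z)) else 0)"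

lemma borel_measurable_tilt_trunc[measurable]: "tilt_trunc t s K \<in> borel_measurable borel"
  unfolding tilt_trunc_def by (subst borel_prod[symmetric]) measurable

lemma tilt_trunc_le_exp: "tilt_trunc t s K (a, b) \<le> ennreal (exp (t * b - s * a))"
  by (simp add: tilt_trunc_def)

lemma tilt_trunc_le_bound: "tilt_trunc t s K z \<le> ennreal (exp ((\<bar>t\<bar> + \<bar>s\<bar>) * K))"
proof (cases "\<bar>fst z\<bar> \<le> K \<and> \<bar>snd z\<bar> \<le> K")
  case True
  have "t * snd z \<le> \<bar>t\<bar> * K"
    using abs_ge_self[of "t * snd z"] mult_left_mono[of "\<bar>snd z\<bar>" K "\<bar>t\<bar>"] True by (simp add: abs_mult)
  moreover have "- (s * fst z) \<le> \<bar>s\<bar> * K"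
    using abs_ge_self[of "- (s * fst z)"] mult_left_mono[of "\<bar>fst z\<bar>" K "\<bar>s\<bar>"] True by (simp add: abs_mult)
  ultimately show ?thesis using True by (simp add: tilt_trunc_def ennreal_leI algebra_simps)
qed (auto simp: tilt_trunc_def)

lemma ex_nn_integral_tilt_trunc_gt_1:
  assumes [measurable]: "X \<in> borel_measurable M" "Y \<in> borel_measurable M"
    and "1 < Lap M X Y t s"
  shows "\<exists>K. 1 < (\<integral>\<^sup>+\<omega>. tilt_trunc t s K (X \<omega>, Y \<omega>) \<partial>M)"
proof -
  define f where "f k \<omega> = tilt_trunc t s (real k) (X \<omega>, Y \<omega>)" for k :: nat and \<omega>
  have "incseq f"
    by (intro incseq_SucI le_funI) (auto simp: f_def tilt_trunc_def)
  have "(SUP k. f k \<omega>) = ennreal (exp (t * Y \<omega> - s * X \<omega>))" for \<omega>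
  proof (rule antisym)
    show "(SUP k. f k \<omega>) \<le> ennreal (exp (t * Y \<omega> - s * X \<omega>))"
      by (rule SUP_least) (simp add: f_def tilt_trunc_def)
    have "f (nat \<lceil>max \<bar>X \<omega>\<bar> \<bar>Y \<omega>\<bar>\<rceil>) \<omega> = ennreal (exp (t * Y \<omega> - s * X \<omega>))"
      unfolding f_def tilt_trunc_def by simp linarith
    then show "ennreal (exp (t * Y \<omega> - s * X \<omega>)) \<le> (SUP k. f k \<omega>)"
      by (metis SUP_upper UNIV_I)
  qed
  moreover have "(\<lambda>\<omega>. (X \<omega>, Y \<omega>)) \<in> borel_measurable M"
    by (subst borel_prod[symmetric]) measurable
  then have "\<And>k. f k \<in> borel_measurable M"
    unfolding f_def by (intro measurable_compose[OF _ borel_measurable_tilt_trunc])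
  ultimately have "Lap M X Y t s = (SUP k. \<integral>\<^sup>+\<omega>. f k \<omega> \<partial>M)"
    unfolding Lap_def using nn_integral_monotone_convergence_SUP[OF \<open>incseq f\<close>] by simp
  with assms(3) show ?thesis by (auto simp: less_SUP_iff f_def)
qed

locale iid_pairs = prob_space M for M :: "'a measure" +
  fixes X Y :: "nat \<Rightarrow> 'a \<Rightarrow> real"
  assumes measurable_X[measurable]: "\<And>n. X n \<in> borel_measurable M"
    and measurable_Y[measurable]: "\<And>n. Y n \<in> borel_measurable M"
    and indep: "indep_vars (\<lambda>_. borel) (\<lambda>n \<omega>. (X n \<omega>, Y n \<omega>)) UNIV"
    and ident: "\<And>n. distr M borel (\<lambda>\<omega>. (X n \<omega>, Y n \<omega>)) = distr M borel (\<lambda>\<omega>. (X 0 \<omega>, Y 0 \<omega>))"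
begin

lemma nn_integral_pair_eq_pair_0:
  assumes [measurable]: "g \<in> borel_measurable borel"
  shows "(\<integral>\<^sup>+\<omega>. g (X n \<omega>, Y n \<omega>) \<partial>M) = (\<integral>\<^sup>+\<omega>. g (X 0 \<omega>, Y 0 \<omega>) \<partial>M)"
  using nn_integral_distr[of "\<lambda>\<omega>. (X n \<omega>, Y n \<omega>)" M borel g]
    nn_integral_distr[of "\<lambda>\<omega>. (X 0 \<omega>, Y 0 \<omega>)" M borel g] ident[of n]
  by simp

lemma nn_integral_indep_last:
  fixes F :: "(nat \<Rightarrow> real \<times> real) \<Rightarrow> ennreal" and g :: "real \<times> real \<Rightarrow> ennreal"
  assumes [measurable]: "F \<in> borel_measurable (PiM {..<n} (\<lambda>_. borel))" "g \<in> borel_measurable borel"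
  shows "(\<integral>\<^sup>+\<omega>. F (\<lambda>i\<in>{..<n}. (X i \<omega>, Y i \<omega>)) * g (X n \<omega>, Y n \<omega>) \<partial>M)
     = (\<integral>\<^sup>+\<omega>. F (\<lambda>i\<in>{..<n}. (X i \<omega>, Y i \<omega>)) \<partial>M) * (\<integral>\<^sup>+\<omega>. g (X 0 \<omega>, Y 0 \<omega>) \<partial>M)"
proof -
  let ?V = "\<lambda>n \<omega>. (X n \<omega>, Y n \<omega>)"
  define U where "U = case_bool (F \<circ> (\<lambda>\<omega>. \<lambda>i\<in>{..<n}. ?V i \<omega>)) ((\<lambda>v. g (v n)) \<circ> (\<lambda>\<omega>. \<lambda>i\<in>{n}. ?V i \<omega>))"
  have restrict: "indep_var (PiM {..<n} (\<lambda>_. borel)) (\<lambda>\<omega>. \<lambda>i\<in>{..<n}. ?V i \<omega>)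
             (PiM {n} (\<lambda>_. borel)) (\<lambda>\<omega>. \<lambda>i\<in>{n}. ?V i \<omega>)"
    by (rule indep_var_restrict[OF indep]) auto
  have "(\<lambda>v. g (v n)) \<in> borel_measurable (PiM {n} (\<lambda>_. borel::(real \<times> real) measure))"
    by measurable
  from indep_var_compose[OF restrict assms(1) this]
  have "indep_vars (case_bool borel borel) U UNIV"
    unfolding indep_var_def U_def .
  moreover have "case_bool borel borel = (\<lambda>_::bool. borel :: ennreal measure)"
    by (auto simp: fun_eq_iff split: bool.split)
  ultimately have "indep_vars (\<lambda>_. borel) U UNIV" by simp
  from indep_vars_nn_integral[OF _ this]
  have "(\<integral>\<^sup>+\<omega>. F (\<lambda>i\<in>{..<n}. ?V i \<omega>) * g (?V n \<omega>) \<partial>M)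
     = (\<integral>\<^sup>+\<omega>. F (\<lambda>i\<in>{..<n}. ?V i \<omega>) \<partial>M) * (\<integral>\<^sup>+\<omega>. g (?V n \<omega>) \<partial>M)"
    by (simp add: UNIV_bool U_def comp_def) (simp only: mult.commute)
  with nn_integral_pair_eq_pair_0[OF assms(2), of n] show ?thesis by simp
qed

lemma nn_integral_prod_iid:
  assumes [measurable]: "g \<in> borel_measurable borel"
  shows "(\<integral>\<^sup>+\<omega>. (\<Prod>i<n. g (X i \<omega>, Y i \<omega>)) \<partial>M) = (\<integral>\<^sup>+\<omega>. g (X 0 \<omega>, Y 0 \<omega>) \<partial>M) ^ n"
proof (induction n)
  case (Suc n)
  have "(\<lambda>v. \<Prod>i<n. g (v i)) \<in> borel_measurable (PiM {..<n} (\<lambda>_. borel::(real \<times> real) measure))"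
    by measurable
  from nn_integral_indep_last[OF this assms] Suc show ?case
    by (simp add: prod.lessThan_Suc mult.commute)
qed (simp add: emeasure_space_1)

lemma nn_integral_exp_sum_eq_Lap_power:
  "(\<integral>\<^sup>+\<omega>. ennreal (exp (\<Sum>i<n. t * Y i \<omega> - s * X i \<omega>)) \<partial>M) = Lap M (X 0) (Y 0) t s ^ n"
proof -
  have g: "(\<lambda>z::real \<times> real. ennreal (exp (t * snd z - s * fst z))) \<in> borel_measurable borel"
    by (subst borel_prod[symmetric]) measurable
  have "ennreal (exp (\<Sum>i<n. t * Y i \<omega> - s * X i \<omega>)) = (\<Prod>i<n. ennreal (exp (t * Y i \<omega> - s * X i \<omega>)))" for \<omega>
    by (simp add: exp_sum prod_ennreal)
  then show ?thesis
    using nn_integral_prod_iid[OF g, of n] by (simp add: Lap_def)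
qed

definition stays_below :: "real \<Rightarrow> nat \<Rightarrow> 'a set" where
  "stays_below x n = {\<omega>\<in>space M. \<forall>k\<in>{1..n}. (\<Sum>i<k. X i \<omega>) \<le> x}"

definition exits_at :: "real \<Rightarrow> nat \<Rightarrow> 'a set" where
  "exits_at x n = {\<omega>\<in>stays_below x n. x < (\<Sum>i<Suc n. X i \<omega>)}"

lemma sets_stays_below[measurable]: "stays_below x n \<in> sets M"
  unfolding stays_below_def by measurable

lemma sets_exits_at[measurable]: "exits_at x n \<in> sets M"
  unfolding exits_at_def by measurable

lemma sum_le_if_stays_below:
  assumes "\<omega> \<in> stays_below x n" "0 \<le> x"
  shows "(\<Sum>i<n. X i \<omega>) \<le> x"
proof (cases "n = 0")
  case False
  then have "n \<in> {1..n}" by simp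
  with assms show ?thesis by (auto simp: stays_below_def)
qed (use assms in simp)

lemma stays_below_Suc:
  "stays_below x (Suc n) = {\<omega>\<in>stays_below x n. (\<Sum>i<Suc n. X i \<omega>) \<le> x}"
proof -
  have "{1..Suc n} = insert (Suc n) {1..n}" by auto
  then show ?thesis by (auto simp: stays_below_def simp del: sum.lessThan_Suc)
qed

lemma indicator_stays_below_eq:
  "indicator (stays_below x n) \<omega>
     = (indicator (exits_at x n) \<omega> + indicator (stays_below x (Suc n)) \<omega> :: ennreal)"
  by (auto simp: indicator_def stays_below_Suc exits_at_def simp del: sum.lessThan_Suc)

lemma Nfun_eq_if_exits_at:
  assumes "\<omega> \<in> exits_at x n"
  shows "Nfun X x \<omega> = n"
  unfolding Nfun_def
proof (rule Greatest_equality)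
  show "\<forall>k\<in>{1..n}. (\<Sum>i<k. X i \<omega>) \<le> x" using assms by (simp add: exits_at_def stays_below_def)
  show "m \<le> n" if "\<forall>k\<in>{1..m}. (\<Sum>i<k. X i \<omega>) \<le> x" for m
  proof (rule ccontr)
    assume "\<not> m \<le> n"
    then have "Suc n \<in> {1..m}" by simp
    with that have "(\<Sum>i<Suc n. X i \<omega>) \<le> x" by blast
    with assms show False by (simp add: exits_at_def del: sum.lessThan_Suc)
  qed
qed

lemma ex_exits_at:
  assumes "\<omega> \<in> space M" "1 \<le> k" "x < (\<Sum>i<k. X i \<omega>)"
  shows "\<exists>n. \<omega> \<in> exits_at x n"
proof -
  define P where "P j \<longleftrightarrow> x < (\<Sum>i<Suc j. X i \<omega>)" for j
  define n where "n = (LEAST j. P j)"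
  have "P (k - 1)" using assms by (simp add: P_def)
  then have "P n" unfolding n_def by (rule LeastI)
  moreover have "(\<Sum>i<j. X i \<omega>) \<le> x" if j: "j \<in> {1..n}" for j
  proof -
    obtain j' where j': "j = Suc j'" "j' < n" using j by (cases j) auto
    then have "\<not> P j'" using not_less_Least[of j' P] by (simp add: n_def)
    then show ?thesis using j'(1) by (simp add: P_def not_less del: sum.lessThan_Suc)
  qed
  ultimately have "\<omega> \<in> exits_at x n"
    using assms(1) by (simp add: exits_at_def stays_below_def P_def)
  then show ?thesis ..
qed

lemma Mgf_eq_suminf_exits_at:
  assumes drift: "AE \<omega> in M. (SUP n\<in>{1..}. ereal (\<Sum>i<n. X i \<omega>)) = \<infinity>"
  shows "Mgf M X Y x t = (\<Sum>n. \<integral>\<^sup>+\<omega>. ennreal (exp (t * (\<Sum>i<n. Y i \<omega>))) * indicator (exits_at x n) \<omega> \<partial>M)"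
proof -
  have "AE \<omega> in M. ennreal (exp (t * Wfun X Y x \<omega>)) =
     (\<Sum>n. ennreal (exp (t * (\<Sum>i<n. Y i \<omega>))) * indicator (exits_at x n) \<omega>)"
    using drift AE_space
  proof eventually_elim
    case (elim \<omega>)
    then have "ereal x < (SUP n\<in>{1..}. ereal (\<Sum>i<n. X i \<omega>))" by simp
    then obtain k where "1 \<le> k" "x < (\<Sum>i<k. X i \<omega>)" by (auto simp: less_SUP_iff)
    then obtain n where n: "\<omega> \<in> exits_at x n" using ex_exits_at elim(2) by blast
    then have "indicator (exits_at x m) \<omega> = (0 :: ennreal)" if "m \<noteq> n" for m
      using that Nfun_eq_if_exits_at[OF n] Nfun_eq_if_exits_at[of \<omega> x m] by (auto simp: indicator_def)
    then have "(\<Sum>m. ennreal (exp (t * (\<Sum>i<m. Y i \<omega>))) * indicator (exits_at x m) \<omega>)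
        = ennreal (exp (t * (\<Sum>i<n. Y i \<omega>)))"
      using n by (subst suminf_finite[of "{n}"]) auto
    then show ?case using Nfun_eq_if_exits_at[OF n] by (simp add: Wfun_def)
  qed
  then have "Mgf M X Y x t = (\<integral>\<^sup>+\<omega>. (\<Sum>n. ennreal (exp (t * (\<Sum>i<n. Y i \<omega>))) * indicator (exits_at x n) \<omega>) \<partial>M)"
    unfolding Mgf_def by (rule nn_integral_cong_AE)
  also have "\<dots> = (\<Sum>n. \<integral>\<^sup>+\<omega>. ennreal (exp (t * (\<Sum>i<n. Y i \<omega>))) * indicator (exits_at x n) \<omega> \<partial>M)"
    by (rule nn_integral_suminf) measurable
  finally show ?thesis .
qed

lemma exits_at_term_le:
  assumes "0 \<le> x"
  shows "(\<integral>\<^sup>+\<omega>. ennreal (exp (t * (\<Sum>i<n. Y i \<omega>))) * indicator (exits_at x n) \<omega> \<partial>M)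
    \<le> ennreal (exp (s * x)) * (Lap M (X 0) (Y 0) t s ^ n * (\<integral>\<^sup>+\<omega>. ennreal (exp (max 0 (- s) * X 0 \<omega>)) \<partial>M))"
proof -
  define F where "F v = ennreal (exp (\<Sum>i<n. t * snd (v i) - s * fst (v i)))" for v :: "nat \<Rightarrow> real \<times> real"
  define f where "f z = ennreal (exp (max 0 (- s) * fst z))" for z :: "real \<times> real"
  have [measurable]: "F \<in> borel_measurable (PiM {..<n} (\<lambda>_. borel))" "f \<in> borel_measurable borel"
    unfolding F_def f_def by (subst borel_prod[symmetric], measurable)+
  have F_restrict: "F (\<lambda>i\<in>{..<n}. (X i \<omega>, Y i \<omega>)) = ennreal (exp (\<Sum>i<n. t * Y i \<omega> - s * X i \<omega>))" for \<omega>
    unfolding F_def by (intro arg_cong[where f="\<lambda>r. ennreal (exp r)"] sum.cong) auto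
  have "ennreal (exp (t * (\<Sum>i<n. Y i \<omega>))) * indicator (exits_at x n) \<omega>
      \<le> ennreal (exp (s * x)) * (F (\<lambda>i\<in>{..<n}. (X i \<omega>, Y i \<omega>)) * f (X n \<omega>, Y n \<omega>))" for \<omega>
  proof (cases "\<omega> \<in> exits_at x n")
    case True
    have "s * (\<Sum>i<n. X i \<omega>) \<le> s * x + max 0 (- s) * X n \<omega>"
    proof (cases "0 \<le> s")
      case True
      with \<open>\<omega> \<in> exits_at x n\<close> \<open>0 \<le> x\<close> show ?thesis
        by (simp add: exits_at_def sum_le_if_stays_below mult_left_mono)
    next
      case False
      from \<open>\<omega> \<in> exits_at x n\<close> have "x \<le> (\<Sum>i<n. X i \<omega>) + X n \<omega>"
        by (simp add: exits_at_def)
      then have "s * ((\<Sum>i<n. X i \<omega>) + X n \<omega>) \<le> s * x"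
        using False by (intro mult_left_mono_neg) auto
      with False show ?thesis by (simp add: distrib_left)
    qed
    then have "t * (\<Sum>i<n. Y i \<omega>) \<le> s * x + ((\<Sum>i<n. t * Y i \<omega> - s * X i \<omega>) + max 0 (- s) * X n \<omega>)"
      by (simp add: sum_subtractf sum_distrib_left)
    then show ?thesis
      using True by (simp add: F_restrict f_def ennreal_leI mult_exp_exp flip: ennreal_mult)
  qed simp
  then have "(\<integral>\<^sup>+\<omega>. ennreal (exp (t * (\<Sum>i<n. Y i \<omega>))) * indicator (exits_at x n) \<omega> \<partial>M)
      \<le> ennreal (exp (s * x)) * (\<integral>\<^sup>+\<omega>. F (\<lambda>i\<in>{..<n}. (X i \<omega>, Y i \<omega>)) * f (X n \<omega>, Y n \<omega>) \<partial>M)"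
    by (subst nn_integral_cmult[symmetric]) (auto intro: nn_integral_mono)
  also have "\<dots> = ennreal (exp (s * x)) * (Lap M (X 0) (Y 0) t s ^ n * (\<integral>\<^sup>+\<omega>. f (X 0 \<omega>, Y 0 \<omega>) \<partial>M))"
    by (subst nn_integral_indep_last) (simp_all add: F_restrict nn_integral_exp_sum_eq_Lap_power)
  finally show ?thesis by (simp add: f_def)
qed

lemma Mgf_le_exp:
  assumes drift: "AE \<omega> in M. (SUP n\<in>{1..}. ereal (\<Sum>i<n. X i \<omega>)) = \<infinity>"
    and "Lap M (X 0) (Y 0) t s < 1"
    and "(\<integral>\<^sup>+\<omega>. ennreal (exp (max 0 (- s) * X 0 \<omega>)) \<partial>M) < \<infinity>"
  shows "\<exists>C. \<forall>x\<ge>0. Mgf M X Y x t \<le> ennreal (C * exp (s * x))"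
proof -
  obtain q where q: "Lap M (X 0) (Y 0) t s = ennreal q" "0 \<le> q" "q < 1"
    using assms(2) by (cases "Lap M (X 0) (Y 0) t s") (auto simp: ennreal_less_iff)
  obtain c where c: "(\<integral>\<^sup>+\<omega>. ennreal (exp (max 0 (- s) * X 0 \<omega>)) \<partial>M) = ennreal c" "0 \<le> c"
    using assms(3) by (cases "\<integral>\<^sup>+\<omega>. ennreal (exp (max 0 (- s) * X 0 \<omega>)) \<partial>M") auto
  have "Mgf M X Y x t \<le> ennreal (c / (1 - q) * exp (s * x))" if "0 \<le> x" for x
  proof -
    have "Mgf M X Y x t \<le> (\<Sum>n. ennreal (exp (s * x) * c * q ^ n))"
      unfolding Mgf_eq_suminf_exits_at[OF drift]
      using exits_at_term_le[OF that, of t _ s] q c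
      by (intro suminf_le) (auto simp: ennreal_mult ennreal_power mult_ac)
    also have "\<dots> = ennreal (exp (s * x) * c * (1 / (1 - q)))"
      using q c by (intro suminf_ennreal_eq sums_mult geometric_sums) auto
    finally show ?thesis by (simp add: field_simps)
  qed
  then show ?thesis by blast
qed

lemma renewal_identity:
  assumes [measurable]: "g \<in> borel_measurable borel"
  shows "(\<integral>\<^sup>+\<omega>. (\<Prod>i<n. g (X i \<omega>, Y i \<omega>)) * indicator (stays_below x n) \<omega> \<partial>M) * (\<integral>\<^sup>+\<omega>. g (X 0 \<omega>, Y 0 \<omega>) \<partial>M)
    = (\<integral>\<^sup>+\<omega>. (\<Prod>i<Suc n. g (X i \<omega>, Y i \<omega>)) * indicator (exits_at x n) \<omega> \<partial>M)
      + (\<integral>\<^sup>+\<omega>. (\<Prod>i<Suc n. g (X i \<omega>, Y i \<omega>)) * indicator (stays_below x (Suc n)) \<omega> \<partial>M)"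
proof -
  define F where "F v = (\<Prod>i<n. g (v i)) * indicator {v. \<forall>k\<in>{1..n}. (\<Sum>i<k. fst (v i)) \<le> x} v"
    for v :: "nat \<Rightarrow> real \<times> real"
  have "(fst :: real \<times> real \<Rightarrow> real) \<in> borel_measurable borel"
    by (subst borel_prod[symmetric]) measurable
  then have [measurable]:
    "(\<lambda>v. fst (v i)) \<in> borel_measurable (PiM {..<n} (\<lambda>_. borel :: (real \<times> real) measure))" if "i < n" for i
    using that by (intro measurable_compose[OF measurable_component_singleton]) auto
  have F_meas[measurable]: "F \<in> borel_measurable (PiM {..<n} (\<lambda>_. borel))"
    unfolding F_def by measurable
  have F_restrict: "F (\<lambda>i\<in>{..<n}. (X i \<omega>, Y i \<omega>))
      = (\<Prod>i<n. g (X i \<omega>, Y i \<omega>)) * indicator (stays_below x n) \<omega>" if "\<omega> \<in> space M" for \<omega>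
    using that by (simp add: F_def stays_below_def indicator_def)
  have "(\<integral>\<^sup>+\<omega>. F (\<lambda>i\<in>{..<n}. (X i \<omega>, Y i \<omega>)) * g (X n \<omega>, Y n \<omega>) \<partial>M)
      = (\<integral>\<^sup>+\<omega>. (\<Prod>i<n. g (X i \<omega>, Y i \<omega>)) * indicator (stays_below x n) \<omega> \<partial>M) * (\<integral>\<^sup>+\<omega>. g (X 0 \<omega>, Y 0 \<omega>) \<partial>M)"
    unfolding nn_integral_indep_last[OF F_meas assms] using F_restrict by (simp cong: nn_integral_cong)
  then have "(\<integral>\<^sup>+\<omega>. (\<Prod>i<n. g (X i \<omega>, Y i \<omega>)) * indicator (stays_below x n) \<omega> \<partial>M) * (\<integral>\<^sup>+\<omega>. g (X 0 \<omega>, Y 0 \<omega>) \<partial>M)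
      = (\<integral>\<^sup>+\<omega>. F (\<lambda>i\<in>{..<n}. (X i \<omega>, Y i \<omega>)) * g (X n \<omega>, Y n \<omega>) \<partial>M)" ..
  also have "\<dots> = (\<integral>\<^sup>+\<omega>. (\<Prod>i<Suc n. g (X i \<omega>, Y i \<omega>)) * indicator (exits_at x n) \<omega>
      + (\<Prod>i<Suc n. g (X i \<omega>, Y i \<omega>)) * indicator (stays_below x (Suc n)) \<omega> \<partial>M)"
    by (intro nn_integral_cong)
      (simp add: F_restrict indicator_stays_below_eq[of x n] distrib_left mult_ac del: prod.lessThan_Suc,
       simp add: mult_ac)
  also have "\<dots> = (\<integral>\<^sup>+\<omega>. (\<Prod>i<Suc n. g (X i \<omega>, Y i \<omega>)) * indicator (exits_at x n) \<omega> \<partial>M)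
      + (\<integral>\<^sup>+\<omega>. (\<Prod>i<Suc n. g (X i \<omega>, Y i \<omega>)) * indicator (stays_below x (Suc n)) \<omega> \<partial>M)"
    by (rule nn_integral_add) measurable
  finally show ?thesis .
qed

lemma stays_below_tilt_le:
  assumes "s \<le> h" "0 \<le> x"
  shows "(\<integral>\<^sup>+\<omega>. ennreal (exp (\<Sum>i<n. t * Y i \<omega> - s * X i \<omega>)) * indicator (stays_below x n) \<omega> \<partial>M)
    \<le> ennreal (exp ((h - s) * x)) * Lap M (X 0) (Y 0) t h ^ n"
proof -
  have "ennreal (exp (\<Sum>i<n. t * Y i \<omega> - s * X i \<omega>)) * indicator (stays_below x n) \<omega>
      \<le> ennreal (exp ((h - s) * x)) * ennreal (exp (\<Sum>i<n. t * Y i \<omega> - h * X i \<omega>))" for \<omega>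
  proof (cases "\<omega> \<in> stays_below x n")
    case True
    have "(\<Sum>i<n. t * Y i \<omega> - s * X i \<omega>) = (\<Sum>i<n. t * Y i \<omega> - h * X i \<omega>) + (h - s) * (\<Sum>i<n. X i \<omega>)"
      by (simp add: sum_subtractf sum_distrib_left algebra_simps)
    moreover have "(h - s) * (\<Sum>i<n. X i \<omega>) \<le> (h - s) * x"
      using sum_le_if_stays_below[OF True \<open>0 \<le> x\<close>] \<open>s \<le> h\<close> by (intro mult_left_mono) auto
    ultimately show ?thesis using True by (simp add: ennreal_leI mult_exp_exp flip: ennreal_mult)
  qed simp
  then have "(\<integral>\<^sup>+\<omega>. ennreal (exp (\<Sum>i<n. t * Y i \<omega> - s * X i \<omega>)) * indicator (stays_below x n) \<omega> \<partial>M)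
      \<le> (\<integral>\<^sup>+\<omega>. ennreal (exp ((h - s) * x)) * ennreal (exp (\<Sum>i<n. t * Y i \<omega> - h * X i \<omega>)) \<partial>M)"
    by (intro nn_integral_mono)
  also have "\<dots> = ennreal (exp ((h - s) * x)) * Lap M (X 0) (Y 0) t h ^ n"
    by (simp add: nn_integral_cmult nn_integral_exp_sum_eq_Lap_power)
  finally show ?thesis .
qed

lemma prod_tilt_trunc_exits_at_le:
  assumes "0 \<le> x" "\<omega> \<in> exits_at x n"
  shows "ennreal (exp (s * x - (\<bar>s\<bar> + (\<bar>t\<bar> + \<bar>s\<bar>)) * K)) * (\<Prod>i<Suc n. tilt_trunc t s K (X i \<omega>, Y i \<omega>))
    \<le> ennreal (exp (t * (\<Sum>i<n. Y i \<omega>)))"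
proof (cases "\<bar>X n \<omega>\<bar> \<le> K \<and> \<bar>Y n \<omega>\<bar> \<le> K")
  case True
  have overshoot: "0 \<le> x - (\<Sum>i<n. X i \<omega>)" "x - (\<Sum>i<n. X i \<omega>) \<le> K"
    using sum_le_if_stays_below[of \<omega> x n] assms True by (auto simp: exits_at_def)
  then have "s * (x - (\<Sum>i<n. X i \<omega>)) \<le> \<bar>s\<bar> * (x - (\<Sum>i<n. X i \<omega>))"
    by (intro mult_right_mono) auto
  also have "\<dots> \<le> \<bar>s\<bar> * K"
    using overshoot by (intro mult_left_mono) auto
  finally have "s * (x - (\<Sum>i<n. X i \<omega>)) \<le> \<bar>s\<bar> * K" .
  then have exponent_le: "s * x - (\<bar>s\<bar> + (\<bar>t\<bar> + \<bar>s\<bar>)) * K + ((\<Sum>i<n. t * Y i \<omega> - s * X i \<omega>) + (\<bar>t\<bar> + \<bar>s\<bar>) * K)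
      \<le> t * (\<Sum>i<n. Y i \<omega>)"
    by (simp add: sum_subtractf sum_distrib_left algebra_simps)
  have "(\<Prod>i<n. tilt_trunc t s K (X i \<omega>, Y i \<omega>)) \<le> ennreal (exp (\<Sum>i<n. t * Y i \<omega> - s * X i \<omega>))"
    using tilt_trunc_le_exp by (intro prod_le_exp_sum) simp
  from mult_mono[OF this tilt_trunc_le_bound]
  have "(\<Prod>i<Suc n. tilt_trunc t s K (X i \<omega>, Y i \<omega>))
      \<le> ennreal (exp (\<Sum>i<n. t * Y i \<omega> - s * X i \<omega>)) * ennreal (exp ((\<bar>t\<bar> + \<bar>s\<bar>) * K))"
    by simp
  then have "ennreal (exp (s * x - (\<bar>s\<bar> + (\<bar>t\<bar> + \<bar>s\<bar>)) * K)) * (\<Prod>i<Suc n. tilt_trunc t s K (X i \<omega>, Y i \<omega>))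
      \<le> ennreal (exp (s * x - (\<bar>s\<bar> + (\<bar>t\<bar> + \<bar>s\<bar>)) * K))
        * (ennreal (exp (\<Sum>i<n. t * Y i \<omega> - s * X i \<omega>)) * ennreal (exp ((\<bar>t\<bar> + \<bar>s\<bar>) * K)))"
    by (rule mult_left_mono) simp
  also have "\<dots> \<le> ennreal (exp (t * (\<Sum>i<n. Y i \<omega>)))"
    using exponent_le by (simp add: ennreal_leI mult_exp_exp flip: ennreal_mult)
  finally show ?thesis .
next
  case False
  then have "tilt_trunc t s K (X n \<omega>, Y n \<omega>) = 0" by (auto simp: tilt_trunc_def)
  then show ?thesis by simp
qed

lemma exits_at_mass_ge_half:
  assumes [measurable]: "g \<in> borel_measurable borel"
    and g_le: "\<And>a b. g (a, b) \<le> ennreal (exp (t * b - s * a))"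
    and "s \<le> h" "Lap M (X 0) (Y 0) t h \<le> 1" "0 \<le> x"
    and g_mass: "(\<integral>\<^sup>+\<omega>. g (X 0 \<omega>, Y 0 \<omega>) \<partial>M) = ennreal L" "1 < L"
  shows "\<exists>m. ennreal (1 / 2)
    \<le> (\<Sum>n<m. \<integral>\<^sup>+\<omega>. (\<Prod>i<Suc n. g (X i \<omega>, Y i \<omega>)) * indicator (exits_at x n) \<omega> \<partial>M)"
proof -
  define A where "A n = (\<integral>\<^sup>+\<omega>. (\<Prod>i<n. g (X i \<omega>, Y i \<omega>)) * indicator (stays_below x n) \<omega> \<partial>M)" for n
  define E where "E n = (\<integral>\<^sup>+\<omega>. (\<Prod>i<Suc n. g (X i \<omega>, Y i \<omega>)) * indicator (exits_at x n) \<omega> \<partial>M)" for n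
  have step: "E n + A (Suc n) = A n * ennreal L" for n
    using renewal_identity[OF assms(1), of n x] g_mass(1) by (simp add: A_def E_def)
  have A_le: "A n \<le> ennreal (exp ((h - s) * x))" for n
  proof -
    have "A n \<le> (\<integral>\<^sup>+\<omega>. ennreal (exp (\<Sum>i<n. t * Y i \<omega> - s * X i \<omega>)) * indicator (stays_below x n) \<omega> \<partial>M)"
      unfolding A_def using g_le by (intro nn_integral_mono mult_right_mono prod_le_exp_sum) simp_all
    also have "\<dots> \<le> ennreal (exp ((h - s) * x)) * Lap M (X 0) (Y 0) t h ^ n"
      using \<open>s \<le> h\<close> \<open>0 \<le> x\<close> by (rule stays_below_tilt_le)
    also have "\<dots> \<le> ennreal (exp ((h - s) * x))"
      using \<open>Lap M (X 0) (Y 0) t h \<le> 1\<close> by (intro mult_left_le power_le_one) simp_all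
    finally show ?thesis .
  qed
  then have A_fin: "A n < \<top>" for n
    by (rule le_less_trans) simp
  have E_fin: "E n < \<top>" for n
  proof -
    have "E n \<le> A n * ennreal L" using step[of n] by (metis add_increasing2 order_refl zero_le)
    also have "\<dots> < \<top>" using A_fin[of n] by (simp add: ennreal_mult_less_top)
    finally show ?thesis .
  qed
  define a where "a n = enn2real (A n)" for n
  define e where "e n = enn2real (E n)" for n
  have "stays_below x 0 = space M" by (simp add: stays_below_def)
  then have a0: "a 0 = 1" by (simp add: a_def A_def emeasure_space_1)
  have a_step: "e n + a (Suc n) = a n * L" for n
    using arg_cong[OF step[of n], of enn2real] A_fin E_fin \<open>1 < L\<close>
    by (simp add: a_def e_def enn2real_plus enn2real_mult)
  have a_le: "a n \<le> exp ((h - s) * x)" for n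
    using A_le[of n] by (simp add: a_def enn2real_leI)
  have "0 \<le> e n" for n by (simp add: e_def)
  from ex_partial_sum_ge_half[OF \<open>1 < L\<close> a0 a_step this a_le]
  obtain m where "1 / 2 \<le> (\<Sum>n<m. e n)" ..
  then have "ennreal (1 / 2) \<le> ennreal (\<Sum>n<m. e n)"
    by (rule ennreal_leI)
  also have "\<dots> = (\<Sum>n<m. E n)"
    using E_fin by (simp add: e_def less_top flip: sum_ennreal)
  finally show ?thesis unfolding E_def by blast
qed

lemma exp_le_Mgf:
  assumes drift: "AE \<omega> in M. (SUP n\<in>{1..}. ereal (\<Sum>i<n. X i \<omega>)) = \<infinity>"
    and "1 < Lap M (X 0) (Y 0) t s" "Lap M (X 0) (Y 0) t h \<le> 1" "s \<le> h"
  shows "\<exists>c>0. \<forall>x\<ge>0. ennreal (c * exp (s * x)) \<le> Mgf M X Y x t"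
proof -
  obtain K where K: "1 < (\<integral>\<^sup>+\<omega>. tilt_trunc t s K (X 0 \<omega>, Y 0 \<omega>) \<partial>M)"
    using ex_nn_integral_tilt_trunc_gt_1[OF measurable_X measurable_Y assms(2)] by blast
  have "(\<integral>\<^sup>+\<omega>. tilt_trunc t s K (X 0 \<omega>, Y 0 \<omega>) \<partial>M) \<le> (\<integral>\<^sup>+\<omega>. ennreal (exp ((\<bar>t\<bar> + \<bar>s\<bar>) * K)) \<partial>M)"
    by (intro nn_integral_mono tilt_trunc_le_bound)
  then have "(\<integral>\<^sup>+\<omega>. tilt_trunc t s K (X 0 \<omega>, Y 0 \<omega>) \<partial>M) < \<top>"
    by (rule le_less_trans) (simp add: emeasure_space_1)
  with K obtain L where L: "(\<integral>\<^sup>+\<omega>. tilt_trunc t s K (X 0 \<omega>, Y 0 \<omega>) \<partial>M) = ennreal L" "1 < L"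
    by (cases "\<integral>\<^sup>+\<omega>. tilt_trunc t s K (X 0 \<omega>, Y 0 \<omega>) \<partial>M") (auto simp: ennreal_less_iff)
  define c where "c = exp (- (\<bar>s\<bar> + (\<bar>t\<bar> + \<bar>s\<bar>)) * K) / 2"
  have "ennreal (c * exp (s * x)) \<le> Mgf M X Y x t" if x: "0 \<le> x" for x
  proof -
    let ?\<kappa> = "ennreal (exp (s * x - (\<bar>s\<bar> + (\<bar>t\<bar> + \<bar>s\<bar>)) * K))"
    let ?E = "\<lambda>n. \<integral>\<^sup>+\<omega>. (\<Prod>i<Suc n. tilt_trunc t s K (X i \<omega>, Y i \<omega>)) * indicator (exits_at x n) \<omega> \<partial>M"
    obtain m where m: "ennreal (1 / 2) \<le> (\<Sum>n<m. ?E n)"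
      using exits_at_mass_ge_half[OF borel_measurable_tilt_trunc tilt_trunc_le_exp assms(4,3) x L] by blast
    have "c * exp (s * x) = exp (s * x - (\<bar>s\<bar> + (\<bar>t\<bar> + \<bar>s\<bar>)) * K) * (1 / 2)"
      by (simp add: c_def field_simps flip: exp_add)
    then have "ennreal (c * exp (s * x)) = ?\<kappa> * ennreal (1 / 2)"
      by (simp only: ennreal_mult exp_ge_zero)
    also have "\<dots> \<le> ?\<kappa> * (\<Sum>n<m. ?E n)"
      using m by (rule mult_left_mono) simp
    also have "\<dots> = (\<Sum>n<m. \<integral>\<^sup>+\<omega>. ?\<kappa> * ((\<Prod>i<Suc n. tilt_trunc t s K (X i \<omega>, Y i \<omega>)) * indicator (exits_at x n) \<omega>) \<partial>M)"
      by (simp add: sum_distrib_left nn_integral_cmult del: prod.lessThan_Suc)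
    also have "\<dots> \<le> (\<Sum>n<m. \<integral>\<^sup>+\<omega>. ennreal (exp (t * (\<Sum>i<n. Y i \<omega>))) * indicator (exits_at x n) \<omega> \<partial>M)"
      using prod_tilt_trunc_exits_at_le[OF x]
      by (intro sum_mono nn_integral_mono) (simp add: indicator_def del: prod.lessThan_Suc)
    also have "\<dots> \<le> Mgf M X Y x t"
      unfolding Mgf_eq_suminf_exits_at[OF drift] by (rule sum_le_suminf) auto
    finally show ?thesis .
  qed
  moreover have "0 < c" by (simp add: c_def)
  ultimately show ?thesis by blast
qed


lemma Mgf_upper_near_hfun:
  assumes drift: "AE \<omega> in M. (SUP n\<in>{1..}. ereal (\<Sum>i<n. X i \<omega>)) = \<infinity>"
    and X_nonzero: "\<not> (AE \<omega> in M. X 0 \<omega> = 0)"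
    and h: "hfun M (X 0) (Y 0) t = ereal h" "h \<in> Dset M (X 0) (Y 0) t"
    and right: "(AE \<omega> in M. 0 \<le> X 0 \<omega>) \<or> interior (Dset M (X 0) (Y 0) t) \<noteq> {}"
    and "betaX M (X 0) < ereal h" "0 < \<epsilon>"
  shows "\<exists>s C. s < h + \<epsilon> \<and> (\<forall>\<^sub>F x in at_top. Mgf M X Y x t \<le> ennreal (C * exp (s * x)))"
proof -
  obtain r where r: "betaX M (X 0) < ereal r" "r < h"
    using ereal_dense2[OF \<open>betaX M (X 0) < ereal h\<close>] by auto
  obtain s where s: "h < s" "s < h + \<epsilon>" "Lap M (X 0) (Y 0) t s < 1"
    using Lap_less_1_right_of_hfun[OF _ _ X_nonzero h right \<open>0 < \<epsilon>\<close>] by auto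
  with r Mgf_le_exp[OF drift s(3) nn_integral_exp_max_finite_of_betaX_less[OF prob_space_axioms _ r(1)]]
  show ?thesis by (auto simp: eventually_at_top_linorder)
qed

lemma Mgf_lower_near_hfun:
  assumes drift: "AE \<omega> in M. (SUP n\<in>{1..}. ereal (\<Sum>i<n. X i \<omega>)) = \<infinity>"
    and h: "hfun M (X 0) (Y 0) t = ereal h" "h \<in> Dset M (X 0) (Y 0) t" and "0 < \<epsilon>"
  shows "\<exists>s c. h - \<epsilon> < s \<and> 0 < c \<and> (\<forall>\<^sub>F x in at_top. ennreal (c * exp (s * x)) \<le> Mgf M X Y x t)"
proof -
  have "1 < Lap M (X 0) (Y 0) t (h - \<epsilon> / 2)" using h \<open>0 < \<epsilon>\<close> by (intro Lap_gt_1_below_hfun) simp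
  from exp_le_Mgf[OF drift this, of h] h(2) \<open>0 < \<epsilon>\<close> obtain c where "0 < c"
    and "\<forall>x\<ge>0. ennreal (c * exp ((h - \<epsilon> / 2) * x)) \<le> Mgf M X Y x t"
    by (auto simp: Dset_def)
  with \<open>0 < \<epsilon>\<close> show ?thesis
    by (intro exI[of _ "h - \<epsilon> / 2"] exI[of _ c]) (auto simp: eventually_at_top_linorder)
qed

end

theorem lemma6p4:
  fixes M :: "'a measure" and X Y :: "nat \<Rightarrow> 'a \<Rightarrow> real" and t :: real
  assumes P: "prob_space M"
    and measX: "\<And>n. X n \<in> borel_measurable M"
    and measY: "\<And>n. Y n \<in> borel_measurable M"
    and indep: "prob_space.indep_vars M (\<lambda>_. borel) (\<lambda>n \<omega>. (X n \<omega>, Y n \<omega>)) UNIV"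
    and ident: "\<And>n. distr M borel (\<lambda>\<omega>. (X n \<omega>, Y n \<omega>)) = distr M borel (\<lambda>\<omega>. (X 0 \<omega>, Y 0 \<omega>))"
    and nondegX: "\<not> (\<exists>c. AE \<omega> in M. X 0 \<omega> = c)"
    and nondegY: "\<not> (\<exists>c. AE \<omega> in M. Y 0 \<omega> = c)"
    and drift: "AE \<omega> in M. (SUP n\<in>{1..}. ereal (\<Sum>i<n. X i \<omega>)) = \<infinity>"
    and hbeta: "betaX M (X 0) < hfun M (X 0) (Y 0) t"
    and hfin: "hfun M (X 0) (Y 0) t < \<infinity>"
    and heq: "Lap M (X 0) (Y 0) t (real_of_ereal (hfun M (X 0) (Y 0) t)) = 1"
    and cases: "measure M {\<omega>\<in>space M. X 0 \<omega> \<ge> 0} = 1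
      \<or> (interior (Dset M (X 0) (Y 0) t) \<noteq> {} \<and>
         (\<forall>q>0. cond_exp_event M
             (\<lambda>\<omega>. exp (q * (t * Y 0 \<omega> - min 0 (real_of_ereal (hfun M (X 0) (Y 0) t)) * X 0 \<omega>)))
             {\<omega>\<in>space M. X 0 \<omega> > 0} < \<infinity>))"
  shows "(\<forall>\<^sub>F x in at_top. Mgf M X Y x t < \<infinity>) \<and>
    ((\<lambda>x. ln (enn2real (Mgf M X Y x t)) / x) \<longlongrightarrow> real_of_ereal (hfun M (X 0) (Y 0) t)) at_top"
proof -
  interpret iid_pairs M X Y
    using P measX measY indep ident by (simp add: iid_pairs_def iid_pairs_axioms_def)
  obtain h where h: "hfun M (X 0) (Y 0) t = ereal h"
    using hfin hbeta by (cases "hfun M (X 0) (Y 0) t") auto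
  with heq have h_in_D: "h \<in> Dset M (X 0) (Y 0) t" by (simp add: Dset_def)
  have right: "(AE \<omega> in M. 0 \<le> X 0 \<omega>) \<or> interior (Dset M (X 0) (Y 0) t) \<noteq> {}"
    using cases AE_prob_1[of "{\<omega>\<in>space M. X 0 \<omega> \<ge> 0}"] by auto
  have X_nonzero: "\<not> (AE \<omega> in M. X 0 \<omega> = 0)" using nondegX by blast
  note upper = Mgf_upper_near_hfun[OF drift X_nonzero h h_in_D right hbeta[unfolded h]]
  note lower = Mgf_lower_near_hfun[OF drift h h_in_D]
  obtain s C where "\<forall>\<^sub>F x in at_top. Mgf M X Y x t \<le> ennreal (C * exp (s * x))"
    using upper[of 1] by auto
  then have "\<forall>\<^sub>F x in at_top. Mgf M X Y x t < \<infinity>"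
    by eventually_elim (simp add: le_less_trans)
  with tendsto_ln_div_of_exp_bounds[OF upper lower] h show ?thesis by simp
qed

end
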